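(* Let $a_1,a_2,\dots$ be a sequence of natural numbers. Assume there are constants $B$ and $C$ such that $a_n\le Bn$ for each $n$, and such that each natural number appears at most $C$ times in the sequence. If $\alpha$ is irrational and the distribution of $\alpha a_n\bmod 1$ converges to a probability measure $\mu$ on the circle, then $\mu$ is absolutely continuous with respect to Lebesgue measure.
   Context: "The distribution of $\alpha a_n\bmod 1$ converges to $\mu$" means that $\frac1N\sum_{n=1}^N\delta_{\alpha a_n\bmod 1}$ converges weakly to $\mu$ on $\mathbb{R}/\mathbb{Z}$. *)

theory Defs
  imports "HOL-Probability.Probability"
begin

text \<open>The circle R/Z is modelled by the fundamental domain [0,1) inside the real line:
  a probability measure on the circle is a Borel probability measure on the reals
  concentrated on [0,1); x mod 1 is frac x.  Continuous functions on R/Z are exactly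
  the continuous 1-periodic functions on R.\<close>

definition circle_prob_measure :: "real measure \<Rightarrow> bool" where
  "circle_prob_measure \<mu> \<longleftrightarrow>
     prob_space \<mu> \<and> sets \<mu> = sets borel \<and> emeasure \<mu> {0..<1} = 1"

definition circle_distribution_converges :: "(nat \<Rightarrow> real) \<Rightarrow> real measure \<Rightarrow> bool" where
  "circle_distribution_converges x \<mu> \<longleftrightarrow>
     (\<forall>f :: real \<Rightarrow> real. continuous_on UNIV f \<longrightarrow> (\<forall>t. f (t + 1) = f t) \<longrightarrow>
        ((\<lambda>N. (\<Sum>n = 1..N. f (frac (x n))) / real N)
          \<longlonglongrightarrow> (\<integral>t. f t \<partial>\<mu>)))"

end

theory Submission
  imports Defs
begin

text \<open>
  Write \<open>\<parallel>x\<parallel>\<close> for the distance from x to the nearest integer and test the empirical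
  measures against a continuous 1-periodic tent function that is 1 on [c - w, c + w] and
  vanishes where \<open>\<parallel>t - c\<parallel> \<ge> 2w\<close>. Since \<open>a\<^sub>n \<le> B n\<close> and every value is taken at most C
  times, the tent averaged over \<open>n \<le> N\<close> is at most C/N times the number of \<open>m \<le> BN\<close> with
  \<open>\<parallel>\<alpha> m - c\<parallel> < 2w\<close>. For irrational \<open>\<alpha>\<close> Dirichlet's theorem yields q with
  \<open>0 < \<parallel>q \<alpha>\<parallel> < 2w\<close>; along each residue class modulo q the points \<open>\<alpha> m\<close> then move in
  steps of size \<open>\<parallel>q \<alpha>\<parallel>\<close>, so that count is \<open>O(w B N) + O(1)\<close>. Letting N tend to infinity
  gives \<open>\<mu>[u, v] \<le> 6 C B (v - u)\<close>, and a measure dominated on intervals by a multiple of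
  Lebesgue measure is absolutely continuous.
\<close>

definition dist_int :: "real \<Rightarrow> real" where
  "dist_int x = \<bar>x - of_int (round x)\<bar>"

lemma dist_int_le: "dist_int x \<le> \<bar>x - of_int k\<bar>"
  unfolding dist_int_def by (rule round_diff_minimal)

lemma dist_int_le_abs: "dist_int x \<le> \<bar>x\<bar>"
  using dist_int_le[of x 0] by simp

lemma dist_int_add_int [simp]: "dist_int (x + of_int k) = dist_int x"
proof -
  have le: "dist_int (y + of_int l) \<le> dist_int y" for y l
    using dist_int_le[of "y + of_int l" "round y + l"] by (simp add: dist_int_def)
  show ?thesis
    using le[of x k] le[of "x + of_int k" "- k"] by simp
qed

lemma dist_int_le_dist_int_add_abs: "dist_int x \<le> dist_int y + \<bar>x - y\<bar>"
  using dist_int_le[of x "round y"] by (simp add: dist_int_def)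

lemma continuous_on_dist_int: "continuous_on UNIV dist_int"
proof (rule lipschitz_on_continuous_on)
  show "1-lipschitz_on UNIV dist_int"
  proof (rule lipschitz_onI)
    fix x y
    show "dist (dist_int x) (dist_int y) \<le> 1 * dist x y"
      using dist_int_le_dist_int_add_abs[of x y] dist_int_le_dist_int_add_abs[of y x]
      by (simp add: dist_real_def abs_minus_commute)
  qed simp
qed

lemma card_le_mult_card_if_fibres_le:
  assumes "finite Y" "f ` A \<subseteq> Y" "\<And>y. y \<in> Y \<Longrightarrow> real (card {x \<in> A. f x = y}) \<le> F"
  shows "real (card A) \<le> F * real (card Y)"
proof -
  have "A = (\<Union>y\<in>Y. {x \<in> A. f x = y})"
    using assms(2) by auto
  then have "card A \<le> (\<Sum>y\<in>Y. card {x \<in> A. f x = y})"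
    by (metis card_UN_le[OF assms(1)])
  then have "real (card A) \<le> (\<Sum>y\<in>Y. real (card {x \<in> A. f x = y}))"
    by (metis of_nat_le_iff of_nat_sum)
  also have "\<dots> \<le> (\<Sum>y\<in>Y. F)"
    using assms(3) by (rule sum_mono)
  finally show ?thesis
    by (simp add: mult.commute)
qed

lemma card_le_if_diameter_less:
  fixes T :: "nat set"
  assumes "finite T" "0 \<le> D" "\<And>i j. i \<in> T \<Longrightarrow> j \<in> T \<Longrightarrow> real i - real j < D"
  shows "real (card T) \<le> D + 1"
proof (cases "T = {}")
  case False
  define m where "m = Min T"
  have m_in: "m \<in> T" and m_le: "\<And>i. i \<in> T \<Longrightarrow> m \<le> i"
    using False assms(1) by (simp_all add: m_def)
  have "T \<subseteq> {m..m + nat \<lfloor>D\<rfloor>}"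
  proof
    fix i assume "i \<in> T"
    then have "m \<le> i" "int i - int m \<le> \<lfloor>D\<rfloor>"
      using assms(3)[of i m] m_in m_le by (auto simp: le_floor_iff)
    then show "i \<in> {m..m + nat \<lfloor>D\<rfloor>}"
      by auto
  qed
  then have "card T \<le> nat \<lfloor>D\<rfloor> + 1"
    using card_mono[of "{m..m + nat \<lfloor>D\<rfloor>}" T] by simp
  then show ?thesis
    using assms(2) by linarith
qed (use assms(2) in simp)

lemma card_progression_near_int_le:
  fixes y e \<delta> :: real and J :: nat
  assumes "e \<noteq> 0" "\<delta> > 0"
  shows "real (card {j \<in> {..J}. dist_int (y + real j * e) < \<delta>})
    \<le> (2 * \<delta> / \<bar>e\<bar> + 1) * (2 * real J * \<bar>e\<bar> + 5)"
proof -
  define A where "A = {j \<in> {..J}. dist_int (y + real j * e) < \<delta>}"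
  define r where "r j = round (y + real j * e)" for j
  define Z where "Z = nat \<lceil>real J * \<bar>e\<bar>\<rceil> + 1"
  define Y where "Y = {round y - int Z .. round y + int Z}"
  have "r ` A \<subseteq> Y"
  proof
    fix n assume "n \<in> r ` A"
    then obtain j where j: "j \<in> A" "n = r j" by auto
    have "\<bar>of_int (r j) - of_int (round y)\<bar> \<le> \<bar>real j * e\<bar> + 1"
      using of_int_round_abs_le[of "y + real j * e"] of_int_round_abs_le[of y]
      unfolding r_def abs_le_iff by linarith
    also have "\<bar>real j * e\<bar> \<le> real J * \<bar>e\<bar>"
      using j by (auto simp: A_def abs_mult intro: mult_right_mono)
    finally have "\<bar>r j - round y\<bar> \<le> int Z"
      unfolding Z_def by linarith
    then show "n \<in> Y"
      using j by (simp add: Y_def abs_le_iff)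
  qed
  moreover have "real (card {j \<in> A. r j = n}) \<le> 2 * \<delta> / \<bar>e\<bar> + 1" for n
  proof (rule card_le_if_diameter_less)
    show "finite {j \<in> A. r j = n}" "0 \<le> 2 * \<delta> / \<bar>e\<bar>"
      using assms by (auto simp: A_def)
    fix i j assume "i \<in> {j \<in> A. r j = n}" "j \<in> {j \<in> A. r j = n}"
    then have "\<bar>y + real i * e - n\<bar> < \<delta>" "\<bar>y + real j * e - n\<bar> < \<delta>"
      by (auto simp: A_def r_def dist_int_def)
    then have "\<bar>real i - real j\<bar> * \<bar>e\<bar> < 2 * \<delta>"
      by (simp add: abs_mult[symmetric] left_diff_distrib abs_less_iff)
    then have "(real i - real j) * \<bar>e\<bar> < 2 * \<delta>"
      by (meson abs_ge_self abs_ge_zero le_less_trans mult_right_mono)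
    then show "real i - real j < 2 * \<delta> / \<bar>e\<bar>"
      using assms(1) by (simp add: pos_less_divide_eq)
  qed
  ultimately have "real (card A) \<le> (2 * \<delta> / \<bar>e\<bar> + 1) * real (card Y)"
    by (intro card_le_mult_card_if_fibres_le) (auto simp: Y_def)
  also have "card Y = 2 * Z + 1"
    by (simp add: Y_def)
  also have "real (2 * Z + 1) \<le> 2 * real J * \<bar>e\<bar> + 5"
    using of_int_ceiling_le_add_one[of "real J * \<bar>e\<bar>"] by (simp add: Z_def) linarith
  finally show ?thesis
    using assms by (simp add: A_def mult_left_mono)
qed

lemma card_le_sum_residue_classes:
  fixes q M :: nat
  assumes "q > 0"
  shows "card {m \<in> {..M}. P m} \<le> (\<Sum>r<q. card {j \<in> {..M div q}. P (r + q * j)})"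
proof -
  define J where "J r = {j \<in> {..M div q}. P (r + q * j)}" for r
  have "{m \<in> {..M}. P m} \<subseteq> (\<Union>r<q. (\<lambda>j. r + q * j) ` J r)"
  proof
    fix m assume "m \<in> {m \<in> {..M}. P m}"
    then have "m = m mod q + q * (m div q)" "m div q \<in> J (m mod q)"
      by (auto simp: J_def intro: div_le_mono)
    moreover have "m mod q \<in> {..<q}"
      using assms by simp
    ultimately show "m \<in> (\<Union>r<q. (\<lambda>j. r + q * j) ` J r)"
      by blast
  qed
  then have "card {m \<in> {..M}. P m} \<le> card (\<Union>r<q. (\<lambda>j. r + q * j) ` J r)"
    by (rule card_mono[rotated]) (simp add: J_def)
  also have "\<dots> \<le> (\<Sum>r<q. card ((\<lambda>j. r + q * j) ` J r))"
    by (rule card_UN_le) simp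
  also have "\<dots> \<le> (\<Sum>r<q. card (J r))"
    by (intro sum_mono card_image_le) (simp add: J_def)
  finally show ?thesis
    by (simp add: J_def)
qed

lemma Dirichlet_approx_irrational:
  fixes \<alpha> \<delta> :: real
  assumes "\<alpha> \<notin> \<rat>" "\<delta> > 0"
  obtains q :: nat and p :: int
  where "q > 0" "real q * \<alpha> - of_int p \<noteq> 0" "\<bar>real q * \<alpha> - of_int p\<bar> < \<delta>"
proof -
  obtain N :: nat where N: "N > 0" "inverse (real N) < \<delta>"
    using real_arch_inverse assms(2) by blast
  obtain p k where k: "0 < k" "\<bar>of_int k * \<alpha> - of_int p\<bar> < 1 / N"
    using Dirichlet_approx[OF N(1), of \<alpha>] by blast
  show thesis
  proof
    show "nat k > 0" "\<bar>real (nat k) * \<alpha> - of_int p\<bar> < \<delta>"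
      using k N by (simp_all add: inverse_eq_divide)
    show "real (nat k) * \<alpha> - of_int p \<noteq> 0"
    proof
      assume "real (nat k) * \<alpha> - of_int p = 0"
      then have "\<alpha> = of_int p / of_int k"
        using k by (simp add: field_simps)
      then show False
        using assms(1) by (metis Rats_divide Rats_of_int)
    qed
  qed
qed

lemma card_near_int_irrational_le:
  fixes \<alpha> c \<delta> :: real
  assumes "\<alpha> \<notin> \<rat>" "\<delta> > 0"
  obtains K where
    "\<And>M. real (card {m \<in> {..M}. dist_int (\<alpha> * real m - c) < \<delta>}) \<le> 6 * \<delta> * real M + K"
proof -
  obtain q :: nat and p :: int where q: "q > 0"
    and "real q * \<alpha> - of_int p \<noteq> 0" "\<bar>real q * \<alpha> - of_int p\<bar> < \<delta>"
    using Dirichlet_approx_irrational[OF assms] .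
  define e where "e = real q * \<alpha> - of_int p"
  have "e \<noteq> 0" and e_less: "\<bar>e\<bar> < \<delta>"
    using \<open>real q * \<alpha> - of_int p \<noteq> 0\<close> \<open>\<bar>real q * \<alpha> - of_int p\<bar> < \<delta>\<close> by (simp_all add: e_def)
  define K where "K = 5 * real q * (2 * \<delta> / \<bar>e\<bar> + 1)"
  have "real (card {m \<in> {..M}. dist_int (\<alpha> * real m - c) < \<delta>}) \<le> 6 * \<delta> * real M + K" for M
  proof -
    define P where "P m \<longleftrightarrow> dist_int (\<alpha> * real m - c) < \<delta>" for m
    define J where "J r = {j \<in> {..M div q}. P (r + q * j)}" for r
    have "card {m \<in> {..M}. P m} \<le> (\<Sum>r<q. card (J r))"
      unfolding J_def by (rule card_le_sum_residue_classes[OF q])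
    then have "real (card {m \<in> {..M}. P m}) \<le> (\<Sum>r<q. real (card (J r)))"
      by (metis of_nat_le_iff of_nat_sum)
    also have "\<dots> \<le> (\<Sum>r<q. (2 * \<delta> / \<bar>e\<bar> + 1) * (2 * real (M div q) * \<bar>e\<bar> + 5))"
    proof (rule sum_mono)
      fix r
      have "dist_int (\<alpha> * real (r + q * j) - c) = dist_int ((\<alpha> * real r - c) + real j * e)" for j
      proof -
        have "\<alpha> * real (r + q * j) - c = (\<alpha> * real r - c) + real j * e + of_int (p * int j)"
          by (simp add: e_def algebra_simps)
        then show ?thesis
          by (metis dist_int_add_int)
      qed
      then have "J r = {j \<in> {..M div q}. dist_int ((\<alpha> * real r - c) + real j * e) < \<delta>}"
        by (simp add: J_def P_def)
      then show "real (card (J r)) \<le> (2 * \<delta> / \<bar>e\<bar> + 1) * (2 * real (M div q) * \<bar>e\<bar> + 5)"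
        using card_progression_near_int_le[OF \<open>e \<noteq> 0\<close> assms(2)] by simp
    qed
    also have "\<dots> = (2 * \<delta> / \<bar>e\<bar> + 1) * (2 * (real q * real (M div q)) * \<bar>e\<bar>) + K"
      by (simp add: K_def algebra_simps)
    also have "\<dots> \<le> (2 * \<delta> / \<bar>e\<bar> + 1) * (2 * real M * \<bar>e\<bar>) + K"
    proof -
      have "real q * real (M div q) \<le> real M"
        by (metis div_times_less_eq_dividend mult.commute of_nat_le_iff of_nat_mult)
      then show ?thesis
        using assms(2) by (intro add_right_mono mult_left_mono mult_right_mono) auto
    qed
    also have "\<dots> = 4 * \<delta> * real M + 2 * \<bar>e\<bar> * real M + K"
      using \<open>e \<noteq> 0\<close> by (simp add: field_simps)
    also have "\<dots> \<le> 6 * \<delta> * real M + K"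
      using e_less by (simp add: mult_right_mono)
    finally show ?thesis
      by (simp add: P_def)
  qed
  then show thesis
    by (rule that)
qed

lemma emeasure_Icc_le_if_interval_bound:
  fixes M :: "real measure"
  assumes sets: "sets M = sets borel" and "0 \<le> L"
    and interval: "\<And>u v. u < v \<Longrightarrow> emeasure M {u..v} \<le> ennreal (L * (v - u))"
    and "u \<le> v"
  shows "emeasure M {u..v} \<le> ennreal (L * (v - u))"
proof (cases "u = v")
  case True
  have "emeasure M {u..u} \<le> 0 + ennreal e" if "e > 0" for e
  proof -
    define d where "d = e / (L + 1)"
    have "d > 0"
      using that \<open>0 \<le> L\<close> by (simp add: d_def)
    have "emeasure M {u..u} \<le> emeasure M {u..u + d}"
      by (rule emeasure_mono) (use \<open>d > 0\<close> in \<open>auto simp: sets\<close>)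
    also have "\<dots> \<le> ennreal (L * d)"
      using interval[of u "u + d"] \<open>d > 0\<close> by simp
    also have "\<dots> \<le> ennreal e"
      using that \<open>0 \<le> L\<close> by (intro ennreal_leI) (simp add: d_def field_simps)
    finally show ?thesis
      by simp
  qed
  then show ?thesis
    using True by (metis diff_self mult_zero_right ennreal_0 ennreal_le_epsilon)
qed (use assms in simp)

lemma Icc_boundaries_null_if_interval_bound:
  fixes M :: "real measure" and \<D> :: "real set set"
  assumes sets: "sets M = sets borel" and "0 \<le> L"
    and interval: "\<And>u v. u < v \<Longrightarrow> emeasure M {u..v} \<le> ennreal (L * (v - u))"
    and "countable \<D>" and Icc_form: "\<And>K. K \<in> \<D> \<Longrightarrow> \<exists>c d. c \<le> d \<and> K = {c..d}"
  shows "(\<Union>K\<in>\<D>. K - interior K) \<in> null_sets M"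
proof (rule null_sets_UN'[OF \<open>countable \<D>\<close>])
  fix K assume "K \<in> \<D>"
  then obtain c d where "c \<le> d" "K = {c..d}"
    using Icc_form by blast
  then have "K - interior K = {c..c} \<union> {d..d}"
    by auto
  moreover have "{t..t} \<in> null_sets M" for t
    using emeasure_Icc_le_if_interval_bound[OF sets \<open>0 \<le> L\<close> interval, of t t]
    by (simp add: null_sets_def sets)
  ultimately show "K - interior K \<in> null_sets M"
    by (metis null_sets.Un)
qed

lemma emeasure_Union_Icc_le_if_interval_bound:
  fixes M :: "real measure" and \<D> :: "real set set"
  assumes sets: "sets M = sets borel" and "0 \<le> L"
    and interval: "\<And>u v. u < v \<Longrightarrow> emeasure M {u..v} \<le> ennreal (L * (v - u))"
    and "countable \<D>" and Icc_form: "\<And>K. K \<in> \<D> \<Longrightarrow> \<exists>c d. c \<le> d \<and> K = {c..d}"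
    and "pairwise (\<lambda>A B. interior A \<inter> interior B = {}) \<D>"
  shows "emeasure M (\<Union>\<D>) \<le> ennreal L * emeasure lborel (\<Union>\<D>)"
proof -
  have disj: "disjoint_family_on interior \<D>"
    using assms(6) by (auto simp: disjoint_family_on_def pairwise_def)
  define I where "I = (\<Union>K\<in>\<D>. interior K)"
  have I_sets: "I \<in> sets borel"
    unfolding I_def by (rule borel_open) auto
  have D_sets: "\<Union>\<D> \<in> sets borel"
    using \<open>countable \<D>\<close> Icc_form by (intro sets.countable_Union) fastforce+
  note null = Icc_boundaries_null_if_interval_bound[OF sets \<open>0 \<le> L\<close> interval \<open>countable \<D>\<close> Icc_form]
  have "\<Union>\<D> \<subseteq> I \<union> (\<Union>K\<in>\<D>. K - interior K)"
    by (auto simp: I_def)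
  then have "emeasure M (\<Union>\<D>) \<le> emeasure M (I \<union> (\<Union>K\<in>\<D>. K - interior K))"
    using I_sets null by (intro emeasure_mono) (auto simp: sets)
  also have "\<dots> = emeasure M I"
    using I_sets null by (intro emeasure_Un_null_set) (auto simp: sets)
  also have "\<dots> = (\<integral>\<^sup>+K. emeasure M (interior K) \<partial>count_space \<D>)"
    unfolding I_def by (rule emeasure_UN_countable[OF _ \<open>countable \<D>\<close> disj]) (simp add: sets)
  also have "\<dots> \<le> (\<integral>\<^sup>+K. ennreal L * emeasure lborel (interior K) \<partial>count_space \<D>)"
  proof (rule nn_integral_mono)
    fix K assume "K \<in> space (count_space \<D>)"
    then obtain c d where cd: "c \<le> d" "K = {c..d}"
      using Icc_form by (metis space_count_space)
    have "emeasure M (interior K) \<le> emeasure M {c..d}"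
      using cd by (intro emeasure_mono) (auto simp: sets)
    also have "\<dots> \<le> ennreal (L * (d - c))"
      using emeasure_Icc_le_if_interval_bound[OF sets \<open>0 \<le> L\<close> interval cd(1)] .
    also have "\<dots> = ennreal L * emeasure lborel (interior K)"
      using cd \<open>0 \<le> L\<close> by (simp add: ennreal_mult)
    finally show "emeasure M (interior K) \<le> ennreal L * emeasure lborel (interior K)" .
  qed
  also have "\<dots> = ennreal L * emeasure lborel I"
    unfolding I_def nn_integral_cmult[of _ "count_space \<D>", simplified]
    by (subst emeasure_UN_countable[OF _ \<open>countable \<D>\<close> disj]) simp_all
  also have "\<dots> \<le> ennreal L * emeasure lborel (\<Union>\<D>)"
    using D_sets by (intro mult_left_mono emeasure_mono) (auto simp: I_def dest: interior_subset[THEN subsetD])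
  finally show ?thesis .
qed

lemma emeasure_le_lborel_plus_if_interval_bound:
  fixes M :: "real measure"
  assumes sets: "sets M = sets borel" and "0 \<le> L"
    and interval: "\<And>u v. u < v \<Longrightarrow> emeasure M {u..v} \<le> ennreal (L * (v - u))"
    and S: "S \<in> sets borel" "bounded S" and "e > 0"
  shows "emeasure M S \<le> ennreal L * (emeasure lborel S + ennreal e)"
proof -
  obtain a where "S \<subseteq> cbox (- a) a"
    using bounded_subset_cbox_symmetric[OF S(2)] .
  moreover have "S \<in> lmeasurable"
    using S by (intro bounded_set_imp_lmeasurable) auto
  ultimately obtain \<D> where D: "countable \<D>"
    "\<And>K. K \<in> \<D> \<Longrightarrow> K \<subseteq> cbox (- a) a \<and> K \<noteq> {} \<and> (\<exists>c d. K = cbox c d)"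
    "pairwise (\<lambda>A B. interior A \<inter> interior B = {}) \<D>"
    "S \<subseteq> \<Union>\<D>" "\<Union>\<D> \<in> lmeasurable" "measure lebesgue (\<Union>\<D>) \<le> measure lebesgue S + e"
    using measurable_outer_intervals_bounded[OF _ _ \<open>e > 0\<close>] by metis
  have Icc_form: "\<exists>c d. c \<le> d \<and> K = {c..d}" if "K \<in> \<D>" for K
    using D(2)[OF that] by fastforce
  have D_sets: "\<Union>\<D> \<in> sets borel"
    using D(1) Icc_form by (intro sets.countable_Union) fastforce+
  have "emeasure M S \<le> emeasure M (\<Union>\<D>)"
    using D(4) D_sets by (intro emeasure_mono) (auto simp: sets)
  also have "\<dots> \<le> ennreal L * emeasure lborel (\<Union>\<D>)"
    using emeasure_Union_Icc_le_if_interval_bound[OF sets \<open>0 \<le> L\<close> interval D(1) Icc_form D(3)] .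
  also have "emeasure lborel (\<Union>\<D>) \<le> emeasure lborel S + ennreal e"
  proof -
    have "emeasure lborel (\<Union>\<D>) = emeasure lebesgue (\<Union>\<D>)"
      using D_sets by (simp add: emeasure_completion)
    also have "\<dots> = ennreal (measure lebesgue (\<Union>\<D>))"
      using D(5) by (rule emeasure_eq_measure2)
    also have "\<dots> \<le> ennreal (measure lebesgue S + e)"
      using D(6) by (rule ennreal_leI)
    also have "\<dots> = emeasure lebesgue S + ennreal e"
      using \<open>S \<in> lmeasurable\<close> \<open>e > 0\<close> by (simp add: emeasure_eq_measure2 ennreal_plus)
    also have "emeasure lebesgue S = emeasure lborel S"
      using S(1) by (simp add: emeasure_completion)
    finally show ?thesis .
  qed
  finally show ?thesis
    by (simp add: mult_left_mono)
qed

lemma emeasure_le_lborel_if_interval_bound: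
  fixes M :: "real measure"
  assumes sets: "sets M = sets borel" and "0 \<le> L"
    and interval: "\<And>u v. u < v \<Longrightarrow> emeasure M {u..v} \<le> ennreal (L * (v - u))"
    and S: "S \<in> sets borel" "bounded S"
  shows "emeasure M S \<le> ennreal L * emeasure lborel S"
proof (rule ennreal_le_epsilon)
  fix e :: real assume "e > 0"
  then have "emeasure M S \<le> ennreal L * (emeasure lborel S + ennreal (e / (L + 1)))"
    using \<open>0 \<le> L\<close> by (intro emeasure_le_lborel_plus_if_interval_bound[OF sets _ interval S]) simp_all
  also have "\<dots> = ennreal L * emeasure lborel S + ennreal (L * (e / (L + 1)))"
    using \<open>0 \<le> L\<close> \<open>e > 0\<close> by (simp add: distrib_left flip: ennreal_mult)
  also have "\<dots> \<le> ennreal L * emeasure lborel S + ennreal e"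
    using \<open>0 \<le> L\<close> \<open>e > 0\<close> by (intro add_left_mono ennreal_leI) (simp add: field_simps)
  finally show "emeasure M S \<le> ennreal L * emeasure lborel S + ennreal e" .
qed

lemma absolutely_continuous_lborel_if_interval_bound:
  fixes M :: "real measure"
  assumes sets: "sets M = sets borel" and "0 \<le> L"
    and interval: "\<And>u v. u < v \<Longrightarrow> emeasure M {u..v} \<le> ennreal (L * (v - u))"
  shows "absolutely_continuous lborel M"
  unfolding absolutely_continuous_def
proof
  fix E :: "real set" assume E: "E \<in> null_sets lborel"
  have "E \<inter> {of_int k..of_int k + 1} \<in> null_sets M" for k :: int
  proof -
    have piece: "E \<inter> {of_int k..of_int k + 1} \<in> null_sets lborel"
      using E by (rule null_set_Int2) simp
    then have piece_sets: "E \<inter> {of_int k..of_int k + 1} \<in> sets borel"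
      by (metis null_setsD2 sets_lborel)
    have "bounded (E \<inter> {of_int k..of_int k + 1})"
      using compact_imp_bounded[OF compact_Icc] by (rule bounded_Int[OF disjI2])
    then have "emeasure M (E \<inter> {of_int k..of_int k + 1})
        \<le> ennreal L * emeasure lborel (E \<inter> {of_int k..of_int k + 1})"
      using emeasure_le_lborel_if_interval_bound[OF sets \<open>0 \<le> L\<close> interval piece_sets] by blast
    also have "\<dots> = 0"
      using piece by (simp add: null_setsD1)
    finally show ?thesis
      using piece_sets by (simp add: null_sets_def sets)
  qed
  then have "(\<Union>k\<in>UNIV. E \<inter> {of_int k..of_int k + 1}) \<in> null_sets M"
    by (intro null_sets_UN') simp_all
  moreover have "(\<Union>k\<in>UNIV. E \<inter> {of_int k..of_int k + 1}) = E"
  proof (intro equalityI subsetI)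
    fix x assume "x \<in> E"
    then have "x \<in> E \<inter> {of_int \<lfloor>x\<rfloor>..of_int \<lfloor>x\<rfloor> + 1}"
      by (simp add: less_imp_le)
    then show "x \<in> (\<Union>k\<in>UNIV. E \<inter> {of_int k..of_int k + 1})"
      by blast
  qed blast
  ultimately show "E \<in> null_sets M"
    by simp
qed

lemma card_indices_with_value_in_le:
  fixes a :: "nat \<Rightarrow> nat" and S :: "nat set"
  assumes growth: "\<forall>n\<ge>1. real (a n) \<le> B * real n"
    and mult: "\<forall>m. finite {n. n \<ge> 1 \<and> a n = m} \<and> card {n. n \<ge> 1 \<and> a n = m} \<le> C"
  shows "real (card {n \<in> {1..N}. a n \<in> S})
    \<le> real C * real (card {m \<in> {..nat \<lfloor>B * real N\<rfloor>}. m \<in> S})"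
proof (rule card_le_mult_card_if_fibres_le)
  have "0 \<le> B"
    using growth[rule_format, of 1] by simp
  show "a ` {n \<in> {1..N}. a n \<in> S} \<subseteq> {m \<in> {..nat \<lfloor>B * real N\<rfloor>}. m \<in> S}"
  proof
    fix m assume "m \<in> a ` {n \<in> {1..N}. a n \<in> S}"
    then obtain n where n: "n \<in> {1..N}" "a n \<in> S" "m = a n"
      by blast
    have "real (a n) \<le> B * real n"
      using growth n by simp
    also have "\<dots> \<le> B * real N"
      using n \<open>0 \<le> B\<close> by (simp add: mult_left_mono)
    finally show "m \<in> {m \<in> {..nat \<lfloor>B * real N\<rfloor>}. m \<in> S}"
      using n by (simp add: le_nat_floor le_floor_iff)
  qed
  fix m
  have "card {n \<in> {n \<in> {1..N}. a n \<in> S}. a n = m} \<le> card {n. n \<ge> 1 \<and> a n = m}"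
    using mult by (intro card_mono) auto
  then show "real (card {n \<in> {n \<in> {1..N}. a n \<in> S}. a n = m}) \<le> real C"
    using mult by (meson of_nat_le_iff order_trans)
qed simp

definition tent :: "real \<Rightarrow> real \<Rightarrow> real \<Rightarrow> real" where
  "tent c w t = min 1 (max 0 (2 - dist_int (t - c) / w))"

lemma continuous_on_tent: "continuous_on UNIV (tent c w)"
  unfolding tent_def divide_inverse
  by (intro continuous_intros continuous_on_compose2[OF continuous_on_dist_int]) auto

lemma tent_add_int [simp]: "tent c w (t + of_int k) = tent c w t"
  using dist_int_add_int[of "t - c" k] by (simp add: tent_def algebra_simps)

lemma tent_frac [simp]: "tent c w (frac t) = tent c w t"
  using tent_add_int[of c w t "- \<lfloor>t\<rfloor>"] by (simp add: frac_def)

lemma indicator_le_tent: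
  assumes "w > 0"
  shows "indicator {c - w..c + w} t \<le> tent c w t"
proof (cases "t \<in> {c - w..c + w}")
  case True
  then have "\<bar>t - c\<bar> \<le> w"
    by (simp add: abs_le_iff)
  then have "dist_int (t - c) \<le> w"
    using dist_int_le_abs order_trans by blast
  then show ?thesis
    using True assms by (simp add: tent_def field_simps)
qed (simp add: tent_def)

lemma tent_le_indicator:
  assumes "w > 0"
  shows "tent c w t \<le> indicator {t. dist_int (t - c) < 2 * w} t"
  using assms by (simp add: tent_def indicator_def field_simps)

context
  fixes a :: "nat \<Rightarrow> nat" and B :: real and C :: nat and \<alpha> :: real and \<mu> :: "real measure"
  assumes growth: "\<forall>n\<ge>1. real (a n) \<le> B * real n"
    and mult: "\<forall>m. finite {n. n \<ge> 1 \<and> a n = m} \<and> card {n. n \<ge> 1 \<and> a n = m} \<le> C"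
    and irr: "\<alpha> \<notin> \<rat>"
    and mu: "circle_prob_measure \<mu>"
    and conv: "circle_distribution_converges (\<lambda>n. \<alpha> * real (a n)) \<mu>"
begin

lemma integral_tent_le:
  assumes "w > 0"
  shows "(\<integral>t. tent c w t \<partial>\<mu>) \<le> 12 * real C * B * w"
proof -
  have "\<forall>t. tent c w (t + 1) = tent c w t"
    using tent_add_int[of c w _ 1] by simp
  then have "(\<lambda>N. (\<Sum>n = 1..N. tent c w (frac (\<alpha> * real (a n)))) / real N)
      \<longlonglongrightarrow> (\<integral>t. tent c w t \<partial>\<mu>)"
    using conv continuous_on_tent unfolding circle_distribution_converges_def by blast
  then have lim: "(\<lambda>N. (\<Sum>n = 1..N. tent c w (\<alpha> * real (a n))) / real N)
      \<longlonglongrightarrow> (\<integral>t. tent c w t \<partial>\<mu>)"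
    by (simp only: tent_frac)
  define S where "S = {m. dist_int (\<alpha> * real m - c) < 2 * w}"
  obtain K where K: "\<And>M. real (card {m \<in> {..M}. m \<in> S}) \<le> 6 * (2 * w) * real M + K"
    using card_near_int_irrational_le[OF irr, of "2 * w" c] \<open>w > 0\<close> by (auto simp: S_def)
  have "0 \<le> B"
    using growth[rule_format, of 1] by simp
  have average: "(\<Sum>n = 1..N. tent c w (\<alpha> * real (a n))) / real N
      \<le> 12 * real C * B * w + real C * K / real N" if "N \<ge> 1" for N
  proof -
    define M where "M = nat \<lfloor>B * real N\<rfloor>"
    have "(\<Sum>n = 1..N. tent c w (\<alpha> * real (a n))) \<le> (\<Sum>n = 1..N. indicator {n. a n \<in> S} n)"
      using tent_le_indicator[OF \<open>w > 0\<close>] by (intro sum_mono) (auto simp: S_def indicator_def)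
    also have "\<dots> = real (card {n \<in> {1..N}. a n \<in> S})"
      by (simp add: indicator_def of_bool_def sum.If_cases Int_def)
    also have "\<dots> \<le> real C * real (card {m \<in> {..M}. m \<in> S})"
      unfolding M_def by (rule card_indices_with_value_in_le[OF growth mult])
    also have "\<dots> \<le> real C * (12 * w * real M + K)"
      using K[of M] by (intro mult_left_mono) auto
    also have "\<dots> \<le> real C * (12 * w * (B * real N) + K)"
      using \<open>0 \<le> B\<close> \<open>w > 0\<close> by (intro mult_left_mono add_right_mono) (auto simp: M_def)
    finally show ?thesis
      using that by (simp add: field_simps)
  qed
  have "(\<lambda>N. 12 * real C * B * w + real C * K / real N) \<longlonglongrightarrow> 12 * real C * B * w"
    using tendsto_add[OF tendsto_const lim_const_over_n] by simp
  with lim show ?thesis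
    by (rule LIMSEQ_le) (use average in \<open>auto intro!: exI[of _ 1]\<close>)
qed

lemma measure_Icc_le:
  assumes "u < v"
  shows "measure \<mu> {u..v} \<le> 6 * real C * B * (v - u)"
proof -
  interpret prob_space \<mu>
    using mu by (simp add: circle_prob_measure_def)
  have sets: "sets \<mu> = sets borel"
    using mu by (simp add: circle_prob_measure_def)
  define c where "c = (u + v) / 2"
  define w where "w = (v - u) / 2"
  have "w > 0" and cw: "c - w = u" "c + w = v"
    using assms by (simp_all add: c_def w_def field_simps)
  have "tent c w \<in> borel_measurable \<mu>"
    using continuous_on_tent by (simp add: measurable_cong_sets[OF sets refl] borel_measurable_continuous_onI)
  then have "integrable \<mu> (tent c w)"
    by (intro integrable_const_bound[where B = 1]) (simp_all add: tent_def)
  moreover have "integrable \<mu> (indicator {u..v} :: real \<Rightarrow> real)"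
    by (intro integrable_const_bound[where B = 1] borel_measurable_indicator) (simp_all add: sets)
  ultimately have "(\<integral>t. indicator {u..v} t \<partial>\<mu>) \<le> (\<integral>t. tent c w t \<partial>\<mu>)"
    using indicator_le_tent[OF \<open>w > 0\<close>, of c] unfolding cw by (intro integral_mono)
  also have "\<dots> \<le> 12 * real C * B * w"
    using integral_tent_le[OF \<open>w > 0\<close>] .
  also have "\<dots> = 6 * real C * B * (v - u)"
    by (simp add: w_def)
  finally show ?thesis
    by (simp add: sets)
qed

end

theorem mainTheorem11:
  fixes a :: "nat \<Rightarrow> nat" and B :: real and C :: nat and \<alpha> :: real
    and \<mu> :: "real measure"
  assumes growth: "\<forall>n\<ge>1. real (a n) \<le> B * real n"
    and mult: "\<forall>m. finite {n. n \<ge> 1 \<and> a n = m} \<and> card {n. n \<ge> 1 \<and> a n = m} \<le> C"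
    and irr: "\<alpha> \<notin> \<rat>"
    and mu: "circle_prob_measure \<mu>"
    and conv: "circle_distribution_converges (\<lambda>n. \<alpha> * real (a n)) \<mu>"
  shows "absolutely_continuous lborel \<mu>"
proof -
  have sets: "sets \<mu> = sets borel"
    using mu by (simp add: circle_prob_measure_def)
  interpret prob_space \<mu>
    using mu by (simp add: circle_prob_measure_def)
  have "0 \<le> 6 * real C * B"
    using growth[rule_format, of 1] by simp
  moreover have "emeasure \<mu> {u..v} \<le> ennreal (6 * real C * B * (v - u))" if "u < v" for u v
    using measure_Icc_le[OF growth mult irr mu conv that] by (simp add: emeasure_eq_measure ennreal_leI)
  ultimately show ?thesis
    by (rule absolutely_continuous_lborel_if_interval_bound[OF sets])
qed

end
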